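(* Let $G$ be a well-shaped mesh in $d$ dimensions with maximum degree $b$, and let $G_p=(V_p,E_p)\subseteq G$ be an induced subgraph. The output $G_{px}=(V_{px},E_{px})$, $G_{py}=(V_{py},E_{py})$ of FullyBalancedPartition$(G_p)$ is a fully-balanced $f$-partition of $G_p$ with $f(N)=O(N^{1-1/d})$; that is, $|E(G_{px},G_{py})|\le f(|V_p|)$, $|V_{px}|=|V_{py}|\pm O(1)$, and $|\mathrm{outgoing}(G_{px})|=|\mathrm{outgoing}(G_{py})|\pm O(1)$.
   Context: A well-shaped mesh in $d$ dimensions ($d>1$ constant) is the graph of a decomposition of a domain in $\mathbb{R}^d$ into interior-disjoint simplices meeting only in lower-dimensional simplices, each with aspect ratio bounded by a fixed constant; it has bounded degree $b$. Asymptotic constants may depend on $d$, $b$ and the aspect-ratio bound. For a partition of $G_p$ into $G_{px},G_{py}$, $\mathrm{outgoing}(G_{px})=E(G_{px},G-G_p)$ is the set of edges from vertices of $G_{px}$ to vertices of $G$ outside $G_p$, similarly for $G_{py}$. Geometric separator step: the randomized algorithm of Miller, Teng, Thurston and Vavasis, applied to an induced subgraph $H$ with vertex set $V_H$, repeatedly draws a random sphere separator and accepts once the resulting partition of $V_H$ has both parts of size at most $\beta|V_H|$ with $\beta=(d+1+\epsilon)/(d+2)$ (fixed $0<\epsilon<1$) and at most $c|V_H|^{1-1/d}$ crossing edges. A decomposition tree of $H$ is obtained by applying this separator to $H$ and recursively to each part until parts are single vertices; its leaves are ordered left to right. FullyBalancedPartition$(G_p)$: (1) build such a decomposition tree $T$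 of $G_p$; (2) form a red-blue array by listing the vertices $v$ of $G_p$ in left-to-right leaf order of $T$, writing a blue element for $v$ followed by $|E(v,G-G_p)|$ red elements; (3) find a contiguous subarray containing half the blue elements to within one and half the red elements to within one; let $V_{px}$ be the vertices whose blue elements lie in the subarray and $V_{py}=V_p\setminus V_{px}$; (4) let $G_{px},G_{py}$ be the induced subgraphs. *)

theory Defs
  imports "HOL-Analysis.Analysis"
begin

definition simplex_verts :: "(real^'n) set \<Rightarrow> bool" where
  "simplex_verts P \<longleftrightarrow> card P = CARD('n) + 1 \<and> \<not> affine_dependent P"

text \<open>Aspect ratio of a simplex = diameter / inradius; "aspect ratio at most alpha"
  means some inscribed ball of radius r has diameter \<le> alpha * r.\<close>
definition aspect_bounded :: "real \<Rightarrow> (real^'n) set \<Rightarrow> bool" where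
  "aspect_bounded \<alpha> P \<longleftrightarrow>
     (\<exists>x r. r > 0 \<and> ball x r \<subseteq> convex hull P \<and> diameter (convex hull P) \<le> \<alpha> * r)"

text \<open>A mesh: finitely many simplices, interior-disjoint, any two meeting only in
  a common lower-dimensional face (the hull of their common vertices).\<close>
definition well_shaped_mesh :: "real \<Rightarrow> (real^'n) set set \<Rightarrow> bool" where
  "well_shaped_mesh \<alpha> M \<longleftrightarrow> finite M \<and>
     (\<forall>P\<in>M. simplex_verts P \<and> aspect_bounded \<alpha> P) \<and>
     (\<forall>P\<in>M. \<forall>Q\<in>M. P \<noteq> Q \<longrightarrow>
        interior (convex hull P) \<inter> interior (convex hull Q) = {} \<and>
        convex hull P \<inter> convex hull Q = convex hull (P \<inter> Q))"

definition mesh_vertices :: "(real^'n) set set \<Rightarrow> (real^'n) set" where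
  "mesh_vertices M = \<Union>M"

definition mesh_edge :: "(real^'n) set set \<Rightarrow> real^'n \<Rightarrow> real^'n \<Rightarrow> bool" where
  "mesh_edge M u v \<longleftrightarrow> u \<noteq> v \<and> (\<exists>P\<in>M. u \<in> P \<and> v \<in> P)"

definition crossing :: "('v \<Rightarrow> 'v \<Rightarrow> bool) \<Rightarrow> 'v set \<Rightarrow> 'v set \<Rightarrow> nat" where
  "crossing E A B = card {(u, w). u \<in> A \<and> w \<in> B \<and> E u w}"

definition outdeg :: "('v \<Rightarrow> 'v \<Rightarrow> bool) \<Rightarrow> 'v set \<Rightarrow> 'v \<Rightarrow> nat" where
  "outdeg E Vp v = card {w. E v w \<and> w \<notin> Vp}"

definition outgoing :: "('v \<Rightarrow> 'v \<Rightarrow> bool) \<Rightarrow> 'v set \<Rightarrow> 'v set \<Rightarrow> nat" where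
  "outgoing E Vp A = card {(u, w). u \<in> A \<and> w \<notin> Vp \<and> E u w}"

datatype 'v dtree = Leaf 'v | Node "'v dtree" "'v dtree"

fun leaves :: "'v dtree \<Rightarrow> 'v list" where
  "leaves (Leaf v) = [v]"
| "leaves (Node l r) = leaves l @ leaves r"

text \<open>decomp_tree E beta c e S T: T is a decomposition tree of the induced subgraph on S
  obtained by recursively applying separator splits that pass the acceptance test of the
  separator step: both parts of size at most beta|S| and at most c|S|^e crossing edges
  (with e = 1 - 1/d).  Any possible output of the randomized procedure is such a tree.\<close>
inductive decomp_tree :: "('v \<Rightarrow> 'v \<Rightarrow> bool) \<Rightarrow> real \<Rightarrow> real \<Rightarrow> real \<Rightarrow> 'v set \<Rightarrow> 'v dtree \<Rightarrow> bool"
  for E :: "'v \<Rightarrow> 'v \<Rightarrow> bool" and \<beta> c e :: real where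
  leaf: "decomp_tree E \<beta> c e {v} (Leaf v)"
| node: "\<lbrakk> A \<inter> B = {}; A \<noteq> {}; B \<noteq> {};
           real (card A) \<le> \<beta> * real (card (A \<union> B));
           real (card B) \<le> \<beta> * real (card (A \<union> B));
           real (crossing E A B) \<le> c * real (card (A \<union> B)) powr e;
           decomp_tree E \<beta> c e A l; decomp_tree E \<beta> c e B r \<rbrakk>
         \<Longrightarrow> decomp_tree E \<beta> c e (A \<union> B) (Node l r)"

text \<open>True = blue element, False = red element.\<close>
definition rb_array :: "('v \<Rightarrow> nat) \<Rightarrow> 'v list \<Rightarrow> bool list" where
  "rb_array out vs = concat (map (\<lambda>v. True # replicate (out v) False) vs)"

definition blues :: "bool list \<Rightarrow> nat" where
  "blues xs = length (filter (\<lambda>x. x) xs)"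

definition reds :: "bool list \<Rightarrow> nat" where
  "reds xs = length (filter Not xs)"

definition subarray :: "nat \<Rightarrow> nat \<Rightarrow> 'a list \<Rightarrow> 'a list" where
  "subarray i j xs = take (j - i) (drop i xs)"

definition balanced_subarray :: "('v \<Rightarrow> nat) \<Rightarrow> 'v list \<Rightarrow> nat \<Rightarrow> nat \<Rightarrow> bool" where
  "balanced_subarray out vs i j \<longleftrightarrow>
     (let arr = rb_array out vs; s = subarray i j arr in
       i \<le> j \<and> j \<le> length arr \<and>
       \<bar>real (blues s) - real (blues arr) / 2\<bar> \<le> 1 \<and>
       \<bar>real (reds s) - real (reds arr) / 2\<bar> \<le> 1)"

definition blue_pos :: "('v \<Rightarrow> nat) \<Rightarrow> 'v list \<Rightarrow> nat \<Rightarrow> nat" where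
  "blue_pos out vs k = k + sum_list (map out (take k vs))"

definition selected :: "('v \<Rightarrow> nat) \<Rightarrow> 'v list \<Rightarrow> nat \<Rightarrow> nat \<Rightarrow> 'v set" where
  "selected out vs i j = {vs ! k | k. k < length vs \<and> i \<le> blue_pos out vs k \<and> blue_pos out vs k < j}"

end

theory Submission
  imports Defs
begin

text \<open>
  Cutting the leaf order of a decomposition tree after any position separates at most
  c n^e / (1 - \<beta>^e) edges: along the path from the root to the cut position each
  separator node is split by the cut, contributing at most its own separator edges,
  and the node sizes along the path shrink geometrically by the factor \<beta>.  The
  contiguous subarray selects exactly the vertices between two such cut positions, so
  its boundary costs at most twice that bound.  Counting blue elements, it holds half
  the vertices up to one; counting red elements, the out-degrees of its vertices sum to
  half the total up to one plus the out-degrees of the two vertices whose red runs it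
  truncates, each at most b.
\<close>

lemma rb_array_Nil [simp]: "rb_array out [] = []"
  by (simp add: rb_array_def)

lemma rb_array_Cons [simp]:
  "rb_array out (v # vs) = True # replicate (out v) False @ rb_array out vs"
  by (simp add: rb_array_def)

lemma blues_simps [simp]:
  "blues [] = 0"
  "blues (x # xs) = (if x then Suc (blues xs) else blues xs)"
  "blues (xs @ ys) = blues xs + blues ys"
  "blues (replicate n False) = 0"
  by (simp_all add: blues_def)

lemma reds_simps [simp]:
  "reds [] = 0"
  "reds (x # xs) = (if x then reds xs else Suc (reds xs))"
  "reds (xs @ ys) = reds xs + reds ys"
  "reds (replicate n False) = n"
  by (simp_all add: reds_def)

lemma blues_rb_array [simp]: "blues (rb_array out vs) = length vs"
  by (induction vs) auto

lemma reds_rb_array [simp]: "reds (rb_array out vs) = sum_list (map out vs)"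
  by (induction vs) auto

lemma blue_pos_0 [simp]: "blue_pos out vs 0 = 0"
  and blue_pos_Cons_Suc [simp]: "blue_pos out (v # vs) (Suc k) = Suc (out v + blue_pos out vs k)"
  by (simp_all add: blue_pos_def)

lemma take_subarray: "i \<le> j \<Longrightarrow> take j xs = take i xs @ subarray i j xs"
  unfolding subarray_def by (metis le_add_diff_inverse take_add)

lemma blue_pos_less_iff:
  "k < length vs \<Longrightarrow> blue_pos out vs k < p \<longleftrightarrow> k < blues (take p (rb_array out vs))"
proof (induction vs arbitrary: k p)
  case (Cons v vs)
  show ?case
  proof (cases p)
    case (Suc p')
    show ?thesis
    proof (cases k)
      case (Suc k')
      then have "blue_pos out vs k' < p' - out v \<longleftrightarrow> k' < blues (take (p' - out v) (rb_array out vs))"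
        using Cons by (intro Cons.IH) simp
      then show ?thesis
        using \<open>p = Suc p'\<close> Suc by auto
    qed (simp add: Suc)
  qed simp
qed simp

lemma blues_take_rb_array_le: "blues (take p (rb_array out vs)) \<le> length vs"
proof (induction vs arbitrary: p)
  case (Cons v vs)
  then show ?case
    by (cases p) auto
qed simp

lemma reds_take_rb_array_le:
  "reds (take p (rb_array out vs)) \<le> sum_list (map out (take (blues (take p (rb_array out vs))) vs))"
proof (induction vs arbitrary: p)
  case (Cons v vs)
  show ?case
  proof (cases p)
    case (Suc p')
    then show ?thesis
      using Cons.IH[of "p' - out v"] by auto
  qed simp
qed simp

lemma sum_take_blues_le_reds:
  assumes "\<forall>v\<in>set vs. out v \<le> b"
  shows "sum_list (map out (take (blues (take p (rb_array out vs))) vs)) \<le> reds (take p (rb_array out vs)) + b"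
  using assms
proof (induction vs arbitrary: p)
  case (Cons v vs)
  show ?case
  proof (cases p)
    case (Suc p')
    then show ?thesis
      using Cons.IH[of "p' - out v"] Cons.prems by (cases "p' < out v") auto
  qed simp
qed simp

lemma nth_in_set_take_iff:
  assumes "distinct vs" "k < length vs"
  shows "vs ! k \<in> set (take m vs) \<longleftrightarrow> k < m"
proof
  assume "vs ! k \<in> set (take m vs)"
  then obtain k' where "k' < min m (length vs)" "vs ! k' = vs ! k"
    by (auto simp: in_set_conv_nth)
  then show "k < m"
    using assms nth_eq_iff_index_eq by fastforce
next
  assume "k < m"
  then show "vs ! k \<in> set (take m vs)"
    using assms(2) by (metis in_set_conv_nth length_take min_less_iff_conj nth_take)
qed

lemma selected_eq_Diff_prefixes:
  assumes "distinct vs"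
  shows "selected out vs i j =
    set (take (blues (take j (rb_array out vs))) vs) - set (take (blues (take i (rb_array out vs))) vs)"
    (is "_ = set (take ?mj vs) - set (take ?mi vs)")
proof -
  have "k < length vs \<Longrightarrow> (i \<le> blue_pos out vs k \<and> blue_pos out vs k < j) \<longleftrightarrow>
      vs ! k \<in> set (take ?mj vs) - set (take ?mi vs)" for k
    using assms by (auto simp: nth_in_set_take_iff blue_pos_less_iff not_less[symmetric])
  moreover have "set (take ?mj vs) \<subseteq> {vs ! k | k. k < length vs}"
    by (auto simp: set_conv_nth[symmetric] dest: in_set_takeD)
  ultimately show ?thesis
    unfolding selected_def by blast
qed

lemma selected_subset_set: "selected out vs i j \<subseteq> set vs"
  unfolding selected_def by auto

lemma sum_Diff_set_take:
  fixes f :: "'v \<Rightarrow> 'a::ab_group_add"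
  assumes "distinct vs" "m \<le> m'"
  shows "sum f (set (take m' vs) - set (take m vs)) =
    sum_list (map f (take m' vs)) - sum_list (map f (take m vs))"
proof -
  have "set (take m vs) \<subseteq> set (take m' vs)"
    using assms(2) by (rule set_take_subset_set_take)
  then show ?thesis
    using assms(1) by (simp add: sum_diff sum_list_distinct_conv_sum_set)
qed

lemma card_selected_balance:
  assumes "distinct vs" and bal: "balanced_subarray out vs i j"
  shows "\<bar>real (card (selected out vs i j)) - real (card (set vs - selected out vs i j))\<bar> \<le> 2"
proof -
  define arr where "arr = rb_array out vs"
  define mi where "mi = blues (take i arr)"
  define mj where "mj = blues (take j arr)"
  have "i \<le> j" and half: "\<bar>real (blues (subarray i j arr)) - real (length vs) / 2\<bar> \<le> 1"
    using bal by (simp_all add: balanced_subarray_def Let_def arr_def)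
  then have mj_eq: "mj = mi + blues (subarray i j arr)"
    unfolding mi_def mj_def by (simp add: take_subarray)
  have "mj \<le> length vs"
    unfolding mj_def arr_def by (rule blues_take_rb_array_le)
  then have card_sel: "real (card (selected out vs i j)) = real mj - real mi"
    using sum_Diff_set_take[OF assms(1), of mi mj "\<lambda>_. 1 :: real"] mj_eq
    by (simp add: selected_eq_Diff_prefixes[OF assms(1)] sum_list_triv arr_def mi_def mj_def)
  have "selected out vs i j \<subseteq> set vs"
    by (rule selected_subset_set)
  moreover have "card (set vs) = length vs"
    using assms(1) by (rule distinct_card)
  ultimately have "real (card (set vs - selected out vs i j)) = real (length vs) - real (card (selected out vs i j))"
    by (metis List.finite_set card_Diff_subset card_mono finite_subset of_nat_diff)
  then show ?thesis
    using card_sel mj_eq half by (simp add: abs_le_iff)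
qed

lemma sum_selected_balance:
  assumes "distinct vs" and bal: "balanced_subarray out vs i j" and out_le: "\<forall>v\<in>set vs. out v \<le> b"
  shows "\<bar>(\<Sum>v\<in>selected out vs i j. real (out v)) - (\<Sum>v\<in>set vs - selected out vs i j. real (out v))\<bar>
    \<le> 2 + 2 * real b"
proof -
  define arr where "arr = rb_array out vs"
  define mi where "mi = blues (take i arr)"
  define mj where "mj = blues (take j arr)"
  define S where "S m = (\<Sum>v\<leftarrow>take m vs. real (out v))" for m
  have "i \<le> j" and half: "\<bar>real (reds (subarray i j arr)) - real (sum_list (map out vs)) / 2\<bar> \<le> 1"
    using bal by (simp_all add: balanced_subarray_def Let_def arr_def)
  then have reds_j: "reds (take j arr) = reds (take i arr) + reds (subarray i j arr)"
    by (simp add: take_subarray)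
  have "mi \<le> mj"
    unfolding mi_def mj_def using \<open>i \<le> j\<close> by (simp add: take_subarray)
  have real_sum_list: "real (sum_list (map out xs)) = (\<Sum>v\<leftarrow>xs. real (out v))" for xs
    by (induction xs) auto
  have bounds: "real (reds (take p arr)) \<le> S (blues (take p arr))"
    "S (blues (take p arr)) \<le> real (reds (take p arr)) + real b" for p
    using reds_take_rb_array_le[where out = out and p = p and vs = vs] sum_take_blues_le_reds[OF out_le, where p = p]
    by (simp_all add: S_def arr_def flip: real_sum_list)
  have sel: "(\<Sum>v\<in>selected out vs i j. real (out v)) = S mj - S mi"
    using sum_Diff_set_take[OF assms(1) \<open>mi \<le> mj\<close>, of "\<lambda>v. real (out v)"]
    by (simp add: selected_eq_Diff_prefixes[OF assms(1)] S_def arr_def mi_def mj_def)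
  have "selected out vs i j \<subseteq> set vs"
    by (rule selected_subset_set)
  then have "(\<Sum>v\<in>set vs - selected out vs i j. real (out v)) =
      real (sum_list (map out vs)) - (\<Sum>v\<in>selected out vs i j. real (out v))"
    using assms(1) by (simp add: real_sum_list sum_list_distinct_conv_sum_set sum_diff)
  then show ?thesis
    using sel bounds[of i] bounds[of j] reds_j half
    unfolding mi_def mj_def by (simp add: abs_le_iff)
qed

lemma decomp_tree_leaves:
  "decomp_tree E \<beta> c e S T \<Longrightarrow> distinct (leaves T) \<and> set (leaves T) = S"
  by (induction rule: decomp_tree.induct) auto

lemma finite_crossing_pairs:
  "finite A \<Longrightarrow> finite B \<Longrightarrow> finite {(u, w). u \<in> A \<and> w \<in> B \<and> E u w}"
  by (rule finite_subset[of _ "A \<times> B"]) auto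

lemma crossing_mono:
  "A \<subseteq> A' \<Longrightarrow> B \<subseteq> B' \<Longrightarrow> finite A' \<Longrightarrow> finite B' \<Longrightarrow> crossing E A B \<le> crossing E A' B'"
  unfolding crossing_def by (rule card_mono[OF finite_crossing_pairs]) auto

lemma crossing_Un_left: "crossing E (A \<union> A') B \<le> crossing E A B + crossing E A' B"
proof -
  have "{(u, w). u \<in> A \<union> A' \<and> w \<in> B \<and> E u w} =
      {(u, w). u \<in> A \<and> w \<in> B \<and> E u w} \<union> {(u, w). u \<in> A' \<and> w \<in> B \<and> E u w}"
    by auto
  then show ?thesis
    unfolding crossing_def by (simp only:) (rule card_Un_le)
qed

lemma crossing_Un_right: "crossing E A (B \<union> B') \<le> crossing E A B + crossing E A B'"
proof -
  have "{(u, w). u \<in> A \<and> w \<in> B \<union> B' \<and> E u w} =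
      {(u, w). u \<in> A \<and> w \<in> B \<and> E u w} \<union> {(u, w). u \<in> A \<and> w \<in> B' \<and> E u w}"
    by auto
  then show ?thesis
    unfolding crossing_def by (simp only:) (rule card_Un_le)
qed

lemma crossing_commute:
  assumes "symp E"
  shows "crossing E A B = crossing E B A"
proof -
  have "{(u, w). u \<in> A \<and> w \<in> B \<and> E u w} = prod.swap ` {(u, w). u \<in> B \<and> w \<in> A \<and> E u w}"
    using sympD[OF assms] by (auto simp: image_iff)
  then show ?thesis
    unfolding crossing_def by (simp add: card_image)
qed

lemma crossing_Diff_le:
  assumes "symp E" and "finite S" "P \<subseteq> Q" "Q \<subseteq> S"
  shows "crossing E (Q - P) (S - (Q - P)) \<le> crossing E P (S - P) + crossing E Q (S - Q)"
proof -
  have "finite P" "finite Q"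
    using assms by (meson finite_subset order_trans)+
  have "S - (Q - P) = P \<union> (S - Q)"
    using assms by blast
  then have "crossing E (Q - P) (S - (Q - P)) \<le> crossing E (Q - P) P + crossing E (Q - P) (S - Q)"
    by (simp add: crossing_Un_right)
  moreover have "crossing E (Q - P) P = crossing E P (Q - P)"
    using \<open>symp E\<close> by (rule crossing_commute)
  moreover have "crossing E P (Q - P) \<le> crossing E P (S - P)"
    using assms \<open>finite P\<close> \<open>finite Q\<close> by (intro crossing_mono) auto
  moreover have "crossing E (Q - P) (S - Q) \<le> crossing E Q (S - Q)"
    using assms \<open>finite P\<close> \<open>finite Q\<close> by (intro crossing_mono) auto
  ultimately show ?thesis
    by linarith
qed

text \<open>K = c / (1 - \<beta>^e) solves K = K \<beta>^e + c: a cut bound K m^e for a part of size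
  m \<le> \<beta> n plus the separator cost c n^e is again at most K n^e.\<close>
lemma geometric_cut_bound_step:
  fixes \<beta> e c m n y :: real
  assumes "0 < \<beta>" "\<beta> < 1" "0 < e" "0 \<le> c" "0 \<le> m" "m \<le> \<beta> * n"
    and "y \<le> c / (1 - \<beta> powr e) * m powr e + c * n powr e"
  shows "y \<le> c / (1 - \<beta> powr e) * n powr e"
proof -
  define K where "K = c / (1 - \<beta> powr e)"
  have "\<beta> powr e < 1"
    using assms powr_less_mono2[of e \<beta> 1] by simp
  then have K_eq: "K * \<beta> powr e + c = K" and "0 \<le> K"
    using assms(4) by (simp_all add: K_def field_simps)
  have "0 \<le> \<beta> * n"
    using assms(5,6) by linarith
  then have "0 \<le> n"
    using assms(1) by (simp add: zero_le_mult_iff)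
  have "m powr e \<le> (\<beta> * n) powr e"
    using assms by (intro powr_mono2) auto
  also have "\<dots> = \<beta> powr e * n powr e"
    using \<open>0 \<le> n\<close> assms(1) by (simp add: powr_mult)
  finally have "K * m powr e \<le> K * \<beta> powr e * n powr e"
    using \<open>0 \<le> K\<close> by (simp add: mult_left_mono mult.assoc)
  have "y \<le> K * m powr e + c * n powr e"
    using assms(7) by (simp add: K_def)
  also have "\<dots> \<le> (K * \<beta> powr e + c) * n powr e"
    using \<open>K * m powr e \<le> K * \<beta> powr e * n powr e\<close> by (simp add: distrib_right)
  also have "\<dots> = K * n powr e"
    by (simp add: K_eq)
  finally show ?thesis
    by (simp add: K_def)
qed

lemma decomp_tree_crossing_prefix_le:
  assumes "decomp_tree E \<beta> c e S T" "0 < \<beta>" "\<beta> < 1" "0 < e" "0 \<le> c"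
  shows "real (crossing E (set (take a (leaves T))) (S - set (take a (leaves T))))
    \<le> c / (1 - \<beta> powr e) * real (card S) powr e"
  using assms
proof (induction arbitrary: a rule: decomp_tree.induct)
  case (leaf v)
  have "crossing E (set (take a [v])) ({v} - set (take a [v])) = 0"
    by (cases a) (simp_all add: crossing_def)
  moreover have "\<beta> powr e < 1"
    using leaf powr_less_mono2[of e \<beta> 1] by simp
  ultimately show ?case
    using leaf by simp
next
  case (node A B l r)
  have "finite A" "finite B"
    using decomp_tree_leaves[OF node.hyps(7)] decomp_tree_leaves[OF node.hyps(8)] by auto
  note cut = node.hyps(6)
  show ?case
  proof (cases "a \<le> length (leaves l)")
    case True
    define P where "P = set (take a (leaves l))"
    have prefix: "set (take a (leaves (Node l r))) = P"
      using True by (simp add: P_def)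
    have "P \<subseteq> A"
      using decomp_tree_leaves[OF node.hyps(7)] by (auto simp: P_def dest: in_set_takeD)
    then have "A \<union> B - P = (A - P) \<union> B"
      using node.hyps(1) by blast
    then have "crossing E P (A \<union> B - P) \<le> crossing E P (A - P) + crossing E A B"
      using crossing_Un_right[of E P "A - P" B] crossing_mono[OF \<open>P \<subseteq> A\<close> order_refl \<open>finite A\<close> \<open>finite B\<close>, of E]
      by simp
    moreover have "real (crossing E P (A - P)) \<le> c / (1 - \<beta> powr e) * real (card A) powr e"
      using node.IH(1)[of a] node.prems by (simp add: P_def)
    ultimately have "real (crossing E P (A \<union> B - P))
        \<le> c / (1 - \<beta> powr e) * real (card A) powr e + c * real (card (A \<union> B)) powr e"
      using cut by linarith
    then show ?thesis
      unfolding prefix by (rule geometric_cut_bound_step[OF node.prems of_nat_0_le_iff node.hyps(4)])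
  next
    case False
    define P where "P = set (take (a - length (leaves l)) (leaves r))"
    have prefix: "set (take a (leaves (Node l r))) = A \<union> P"
      using False decomp_tree_leaves[OF node.hyps(7)] by (simp add: P_def)
    have "P \<subseteq> B"
      using decomp_tree_leaves[OF node.hyps(8)] by (auto simp: P_def dest: in_set_takeD)
    then have rest: "A \<union> B - (A \<union> P) = B - P"
      using node.hyps(1) by blast
    have "crossing E (A \<union> P) (B - P) \<le> crossing E P (B - P) + crossing E A B"
      using crossing_Un_left[of E A P "B - P"] crossing_mono[OF order_refl Diff_subset[of B P] \<open>finite A\<close> \<open>finite B\<close>, of E]
      by linarith
    moreover have "real (crossing E P (B - P)) \<le> c / (1 - \<beta> powr e) * real (card B) powr e"
      using node.IH(2)[of "a - length (leaves l)"] node.prems by (simp add: P_def)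
    ultimately have "real (crossing E (A \<union> P) (B - P))
        \<le> c / (1 - \<beta> powr e) * real (card B) powr e + c * real (card (A \<union> B)) powr e"
      using cut by linarith
    then show ?thesis
      unfolding prefix rest by (rule geometric_cut_bound_step[OF node.prems of_nat_0_le_iff node.hyps(5)])
  qed
qed

lemma crossing_selected_le:
  assumes "symp E" and dt: "decomp_tree E \<beta> c e S T"
    and "0 < \<beta>" "\<beta> < 1" "0 < e" "0 \<le> c" "i \<le> j"
  shows "real (crossing E (selected out (leaves T) i j) (S - selected out (leaves T) i j))
    \<le> 2 * (c / (1 - \<beta> powr e)) * real (card S) powr e"
proof -
  define vs where "vs = leaves T"
  define P where "P p = set (take (blues (take p (rb_array out vs))) vs)" for p
  have "distinct vs" "set vs = S"
    using decomp_tree_leaves[OF dt] by (simp_all add: vs_def)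
  then have sel: "selected out vs i j = P j - P i" and "finite S"
    by (auto simp: selected_eq_Diff_prefixes P_def)
  have "P i \<subseteq> P j"
    unfolding P_def using \<open>i \<le> j\<close> by (simp add: take_subarray set_take_subset_set_take)
  moreover have "P j \<subseteq> S"
    using \<open>set vs = S\<close> by (auto simp: P_def dest: in_set_takeD)
  ultimately have "crossing E (P j - P i) (S - (P j - P i)) \<le> crossing E (P i) (S - P i) + crossing E (P j) (S - P j)"
    by (rule crossing_Diff_le[OF \<open>symp E\<close> \<open>finite S\<close>])
  then have "real (crossing E (P j - P i) (S - (P j - P i)))
      \<le> real (crossing E (P i) (S - P i)) + real (crossing E (P j) (S - P j))"
    by (metis of_nat_add of_nat_mono)
  moreover have prefix_cut: "real (crossing E (P p) (S - P p)) \<le> c / (1 - \<beta> powr e) * real (card S) powr e" for p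
    unfolding P_def vs_def by (rule decomp_tree_crossing_prefix_le[OF dt assms(3-6)])
  ultimately show ?thesis
    unfolding vs_def[symmetric] sel
    using prefix_cut[of i] prefix_cut[of j] by linarith
qed

lemma outgoing_eq_sum_outdeg:
  assumes "finite A" "\<And>v. v \<in> A \<Longrightarrow> finite {w. E v w}"
  shows "outgoing E Vp A = (\<Sum>v\<in>A. outdeg E Vp v)"
proof -
  have pairs: "{(u, w). u \<in> A \<and> w \<notin> Vp \<and> E u w} = (SIGMA u:A. {w. E u w \<and> w \<notin> Vp})"
    by auto
  have "\<forall>u\<in>A. finite {w. E u w \<and> w \<notin> Vp}"
    using assms(2) by auto
  then show ?thesis
    unfolding outgoing_def outdeg_def pairs by (rule card_SigmaI[OF assms(1)])
qed

lemma symp_mesh_edge: "symp (mesh_edge M)"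
  unfolding symp_def mesh_edge_def by blast

lemma finite_mesh_neighbours:
  assumes "well_shaped_mesh \<alpha> M"
  shows "finite {w. mesh_edge M v w}"
proof -
  have "finite P" if "P \<in> M" for P
  proof (rule card_ge_0_finite)
    show "card P > 0"
      using assms that unfolding well_shaped_mesh_def simplex_verts_def by simp
  qed
  moreover have "finite M"
    using assms unfolding well_shaped_mesh_def by simp
  ultimately have "finite (\<Union>M)"
    by (rule finite_Union[rotated])
  moreover have "{w. mesh_edge M v w} \<subseteq> \<Union>M"
    unfolding mesh_edge_def by blast
  ultimately show ?thesis
    by (rule finite_subset[rotated])
qed

lemma outdeg_le_card_neighbours: "finite {w. E v w} \<Longrightarrow> outdeg E Vp v \<le> card {w. E v w}"
  unfolding outdeg_def by (rule card_mono) auto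

lemma fully_balanced_partition:
  assumes "symp E" and fin: "\<And>v. finite {w. E v w}"
    and deg: "\<And>v. card {w. E v w} \<le> b"
    and dt: "decomp_tree E \<beta> c e Vp T" and bal: "balanced_subarray (outdeg E Vp) (leaves T) i j"
    and \<beta>: "0 < \<beta>" "\<beta> < 1" and "0 < e" "0 \<le> c"
  defines "Vpx \<equiv> selected (outdeg E Vp) (leaves T) i j"
  shows "real (crossing E Vpx (Vp - Vpx)) \<le> 2 * (c / (1 - \<beta> powr e)) * real (card Vp) powr e"
    and "\<bar>real (card Vpx) - real (card (Vp - Vpx))\<bar> \<le> 2"
    and "\<bar>real (outgoing E Vp Vpx) - real (outgoing E Vp (Vp - Vpx))\<bar> \<le> 2 + 2 * real b"
proof -
  have leaves: "distinct (leaves T)" "set (leaves T) = Vp"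
    using decomp_tree_leaves[OF dt] by simp_all
  have "i \<le> j"
    using bal by (simp add: balanced_subarray_def Let_def)
  then show "real (crossing E Vpx (Vp - Vpx)) \<le> 2 * (c / (1 - \<beta> powr e)) * real (card Vp) powr e"
    unfolding Vpx_def by (rule crossing_selected_le[OF \<open>symp E\<close> dt \<beta> \<open>0 < e\<close> \<open>0 \<le> c\<close>])
  show "\<bar>real (card Vpx) - real (card (Vp - Vpx))\<bar> \<le> 2"
    unfolding Vpx_def using card_selected_balance[OF leaves(1) bal] leaves(2) by simp
  have "outdeg E Vp v \<le> b" for v
    by (rule order.trans[OF outdeg_le_card_neighbours[OF fin] deg])
  then have "\<bar>(\<Sum>v\<in>Vpx. real (outdeg E Vp v)) - (\<Sum>v\<in>Vp - Vpx. real (outdeg E Vp v))\<bar> \<le> 2 + 2 * real b"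
    unfolding Vpx_def using sum_selected_balance[OF leaves(1) bal] leaves(2) by simp
  moreover have "real (outgoing E Vp A) = (\<Sum>v\<in>A. real (outdeg E Vp v))" if "A \<subseteq> Vp" for A
  proof -
    have "finite A"
      using that leaves(2) finite_subset by blast
    then have "outgoing E Vp A = (\<Sum>v\<in>A. outdeg E Vp v)"
      using fin by (rule outgoing_eq_sum_outdeg)
    then show ?thesis
      by simp
  qed
  moreover have "Vpx \<subseteq> Vp"
    unfolding Vpx_def leaves(2)[symmetric] by (rule selected_subset_set)
  ultimately show "\<bar>real (outgoing E Vp Vpx) - real (outgoing E Vp (Vp - Vpx))\<bar> \<le> 2 + 2 * real b"
    by simp
qed

theorem lemma4:
  fixes \<alpha> \<epsilon> c :: real and b :: nat
  assumes "CARD('n) \<ge> 2" and "0 < \<epsilon>" and "\<epsilon> < 1" and "c > 0"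
  shows "\<exists>C::real. \<forall>(M :: (real^'n) set set) Vp T i j.
     well_shaped_mesh \<alpha> M \<and> (\<forall>v. card {w. mesh_edge M v w} \<le> b) \<and>
     Vp \<subseteq> mesh_vertices M \<and>
     decomp_tree (mesh_edge M) ((real CARD('n) + 1 + \<epsilon>) / (real CARD('n) + 2)) c
                 (1 - 1 / real CARD('n)) Vp T \<and>
     balanced_subarray (outdeg (mesh_edge M) Vp) (leaves T) i j
   \<longrightarrow>
     (let Vpx = selected (outdeg (mesh_edge M) Vp) (leaves T) i j; Vpy = Vp - Vpx in
       real (crossing (mesh_edge M) Vpx Vpy) \<le> C * real (card Vp) powr (1 - 1 / real CARD('n)) \<and>
       \<bar>real (card Vpx) - real (card Vpy)\<bar> \<le> C \<and>
       \<bar>real (outgoing (mesh_edge M) Vp Vpx) - real (outgoing (mesh_edge M) Vp Vpy)\<bar> \<le> C)"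
proof -
  \<comment> \<open>The geometry enters only through the separator bounds recorded in the decomposition
    tree; of the mesh itself only symmetry and finite neighbourhoods are used.\<close>
  define \<beta> where "\<beta> = (real CARD('n) + 1 + \<epsilon>) / (real CARD('n) + 2)"
  define e where "e = 1 - 1 / real CARD('n)"
  have "0 < \<beta>" "\<beta> < 1" "0 < e"
    using assms(1-3) by (simp_all add: \<beta>_def e_def field_simps)
  define K where "K = c / (1 - \<beta> powr e)"
  define C where "C = max (2 * K) (2 + 2 * real b)"
  show ?thesis
    unfolding \<beta>_def[symmetric] e_def[symmetric] Let_def
  proof (intro exI[of _ C] allI impI, elim conjE)
    fix M :: "(real^'n) set set" and Vp T i j
    let ?E = "mesh_edge M"
    let ?Vpx = "selected (outdeg ?E Vp) (leaves T) i j"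
    assume mesh: "well_shaped_mesh \<alpha> M" and deg: "\<forall>v. card {w. ?E v w} \<le> b"
      and dt: "decomp_tree ?E \<beta> c e Vp T" and bal: "balanced_subarray (outdeg ?E Vp) (leaves T) i j"
    note bounds = fully_balanced_partition[OF symp_mesh_edge finite_mesh_neighbours[OF mesh]
        deg[rule_format] dt bal \<open>0 < \<beta>\<close> \<open>\<beta> < 1\<close> \<open>0 < e\<close> less_imp_le[OF assms(4)], folded K_def]
    have "2 * K * real (card Vp) powr e \<le> C * real (card Vp) powr e"
      unfolding C_def by (intro mult_right_mono) auto
    then show "real (crossing ?E ?Vpx (Vp - ?Vpx)) \<le> C * real (card Vp) powr e \<and>
        \<bar>real (card ?Vpx) - real (card (Vp - ?Vpx))\<bar> \<le> C \<and>
        \<bar>real (outgoing ?E Vp ?Vpx) - real (outgoing ?E Vp (Vp - ?Vpx))\<bar> \<le> C"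
      using bounds unfolding C_def by linarith
  qed
qed

end
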